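(* Let $1\le k\le n$ and let $\lambda=(\lambda_1,\dots,\lambda_n)$ be a partition with $\lambda_{n-k+1}=\dots=\lambda_n=0$. Let $x=(x_1,\dots,x_{n-k},t^{k-1},t^{k-2},\dots,t,1)\in\mathbb{C}^n$, $\hat\lambda=(\lambda_1,\dots,\lambda_{n-k})$ and $\hat x=(x_1,\dots,x_{n-k})$. Then $$W_\lambda(x;q,p,t,a,b)=W_{\hat\lambda}(\hat xt^{-k};q,p,t,at^{2k},bt^{k}).$$
   Context: Fix $|p|<1$; parameters generic. $E(x)=(x;p)_\infty(p/x;p)_\infty$. For integer $m\ge0$, $(a)_m=\prod_{k=0}^{m-1}E(aq^k)$, for $m<0$, $(a)_m=1/(aq^m)_{-m}$; for a partition $\lambda$ with $N$ parts $(a)_\lambda=\prod_{i=1}^N(at^{1-i})_{\lambda_i}$; several arguments denote products; integer subscripts denote the single-integer symbol. Scalars multiply tuples componentwise. $W$ functions for $N$-part partitions (here $N=n$ or $N=n-k$, the number of variables): for $\lambda_1\ge\mu_1\ge\dots\ge\lambda_N\ge\mu_N$, $\lambda_{N+1}=\mu_{N+1}=0$, $H_{\lambda/\mu}(q,p,t,b)=\prod_{1\le i<j\le N}\Big\{\frac{(q^{\mu_i-\mu_{j-1}}t^{j-i})_{\mu_{j-1}-\lambda_j}(q^{\lambda_i+\lambda_j}t^{3-j-i}b)_{\mu_{j-1}-\lambda_j}}{(q^{\mu_i-\mu_{j-1}+1}t^{j-i-1})_{\mu_{j-1}-\lambda_j}(q^{\lambda_i+\lambda_j+1}t^{2-j-i}b)_{\mu_{j-1}-\lambda_j}}\frac{(q^{\lambda_i-\mu_{j-1}+1}t^{j-i-1})_{\mu_{j-1}-\lambda_j}}{(q^{\lambda_i-\mu_{j-1}}t^{j-i})_{\mu_{j-1}-\lambda_j}}\Big\}\prod_{1\le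 i<j-1\le N}\frac{(q^{\mu_i+\lambda_j+1}t^{1-j-i}b)_{\mu_{j-1}-\lambda_j}}{(q^{\mu_i+\lambda_j}t^{2-j-i}b)_{\mu_{j-1}-\lambda_j}}$; for $x\in\mathbb{C}$, $W_{\lambda/\mu}(x;q,p,t,a,b)=H_{\lambda/\mu}\frac{(x^{-1},ax)_\lambda(qbx/t,qb/(axt))_\mu}{(x^{-1},ax)_\mu(qbx,qb/(ax))_\lambda}\prod_{i=1}^N\frac{E(bt^{1-2i}q^{2\mu_i})}{E(bt^{1-2i})}\frac{(bt^{1-2i})_{\mu_i+\lambda_{i+1}}}{(bqt^{-2i})_{\mu_i+\lambda_{i+1}}}t^{i(\mu_i-\lambda_{i+1})}$ (zero if the interlacing fails); recursively $W_{\lambda/\mu}(y,z_1,\dots,z_\ell;q,p,t,a,b)=\sum_\nu W_{\lambda/\nu}(yt^{-\ell};q,p,t,at^{2\ell},bt^\ell)W_{\nu/\mu}(z_1,\dots,z_\ell;q,p,t,a,b)$ over $\nu$ with $\lambda_1\ge\nu_1\ge\dots\ge\lambda_N\ge\nu_N\ge0$; $W_\lambda=W_{\lambda/0}$, a function of $N$ variables. *)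

theory Defs
  imports "HOL-Analysis.Analysis"
begin

definition qpinf :: "complex \<Rightarrow> complex \<Rightarrow> complex" where
  "qpinf p x = (\<Prod>k. (1 - x * p ^ k))"

definition Eth :: "complex \<Rightarrow> complex \<Rightarrow> complex" where
  "Eth p x = qpinf p x * qpinf p (p / x)"

definition epoch :: "complex \<Rightarrow> complex \<Rightarrow> complex \<Rightarrow> int \<Rightarrow> complex" where
  "epoch p q a m =
     (if 0 \<le> m then (\<Prod>k<nat m. Eth p (a * q ^ k))
      else 1 / (\<Prod>k<nat (- m). Eth p ((a * q powi m) * q ^ k)))"

text \<open>Partitions with N parts are functions on indices 1..N; outside they read as 0
  (so that lambda_{N+1} = mu_{N+1} = 0).\<close>
definition pt :: "nat \<Rightarrow> (nat \<Rightarrow> nat) \<Rightarrow> nat \<Rightarrow> int" where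
  "pt N lam i = (if 1 \<le> i \<and> i \<le> N then int (lam i) else 0)"

definition epochP :: "complex \<Rightarrow> complex \<Rightarrow> complex \<Rightarrow> nat \<Rightarrow> complex \<Rightarrow> (nat \<Rightarrow> nat) \<Rightarrow> complex" where
  "epochP p q t N a lam = (\<Prod>i\<in>{1..N}. epoch p q (a * t powi (1 - int i)) (pt N lam i))"

definition interlace :: "nat \<Rightarrow> (nat \<Rightarrow> nat) \<Rightarrow> (nat \<Rightarrow> nat) \<Rightarrow> bool" where
  "interlace N lam mu \<longleftrightarrow> (\<forall>i\<in>{1..N}. pt N lam (i + 1) \<le> pt N mu i \<and> pt N mu i \<le> pt N lam i)"

definition Hfac :: "complex \<Rightarrow> complex \<Rightarrow> complex \<Rightarrow> complex \<Rightarrow> nat \<Rightarrow> (nat \<Rightarrow> nat) \<Rightarrow> (nat \<Rightarrow> nat) \<Rightarrow> complex" where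
  "Hfac q p t b N lam mu =
    (let L = pt N lam; M = pt N mu; ep = epoch p q; Q = (\<lambda>r. q powi r); T = (\<lambda>s. t powi s) in
     (\<Prod>i\<in>{1..N}. \<Prod>j\<in>{i+1..N}.
        let m = M (j - 1) - L j; ii = int i; jj = int j in
        (ep (Q (M i - M (j - 1)) * T (jj - ii)) m * ep (Q (L i + L j) * T (3 - jj - ii) * b) m)
        / (ep (Q (M i - M (j - 1) + 1) * T (jj - ii - 1)) m * ep (Q (L i + L j + 1) * T (2 - jj - ii) * b) m)
        * (ep (Q (L i - M (j - 1) + 1) * T (jj - ii - 1)) m / ep (Q (L i - M (j - 1)) * T (jj - ii)) m))
     * (\<Prod>i\<in>{1..N}. \<Prod>j\<in>{i+2..N+1}.
        let m = M (j - 1) - L j; ii = int i; jj = int j in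
        ep (Q (M i + L j + 1) * T (1 - jj - ii) * b) m / ep (Q (M i + L j) * T (2 - jj - ii) * b) m))"

definition W1 :: "complex \<Rightarrow> complex \<Rightarrow> complex \<Rightarrow> nat \<Rightarrow> complex \<Rightarrow> complex \<Rightarrow> complex
                   \<Rightarrow> (nat \<Rightarrow> nat) \<Rightarrow> (nat \<Rightarrow> nat) \<Rightarrow> complex" where
  "W1 q p t N x a b lam mu =
    (if interlace N lam mu then
      (let L = pt N lam; M = pt N mu; P = epochP p q t N; T = (\<lambda>s. t powi s) in
       Hfac q p t b N lam mu
       * (P (inverse x) lam * P (a * x) lam * P (q * b * x / t) mu * P (q * b / (a * x * t)) mu)
       / (P (inverse x) mu * P (a * x) mu * P (q * b * x) lam * P (q * b / (a * x)) lam)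
       * (\<Prod>i\<in>{1..N}. let ii = int i in
           Eth p (b * T (1 - 2 * ii) * q powi (2 * M i)) / Eth p (b * T (1 - 2 * ii))
           * (epoch p q (b * T (1 - 2 * ii)) (M i + L (i + 1))
              / epoch p q (b * q * T (- 2 * ii)) (M i + L (i + 1)))
           * T (ii * (M i - L (i + 1)))))
     else 0)"

definition interl_set :: "nat \<Rightarrow> (nat \<Rightarrow> nat) \<Rightarrow> (nat \<Rightarrow> nat) set" where
  "interl_set N lam = {nu. (\<forall>i. (i < 1 \<or> N < i) \<longrightarrow> nu i = 0) \<and> interlace N lam nu}"

fun Wm :: "complex \<Rightarrow> complex \<Rightarrow> complex \<Rightarrow> nat \<Rightarrow> complex list \<Rightarrow> complex \<Rightarrow> complex
             \<Rightarrow> (nat \<Rightarrow> nat) \<Rightarrow> (nat \<Rightarrow> nat) \<Rightarrow> complex" where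
  "Wm q p t N [] a b lam mu = (if (\<forall>i\<in>{1..N}. pt N lam i = pt N mu i) then 1 else 0)"
| "Wm q p t N (y # zs) a b lam mu =
     (\<Sum>nu\<in>interl_set N lam.
        W1 q p t N (y * t powi (- int (length zs))) (a * t powi (2 * int (length zs)))
           (b * t powi (int (length zs))) lam nu
        * Wm q p t N zs a b nu mu)"

text \<open>Genericity: q,t,a,b,x_i nonzero, and no nontrivial Laurent monomial in q,t,a,b,x_i
  lies in p^Z (so no E-factor with a nontrivial argument vanishes).\<close>
definition generic_params :: "complex \<Rightarrow> complex \<Rightarrow> complex \<Rightarrow> complex \<Rightarrow> complex \<Rightarrow> complex list \<Rightarrow> bool" where
  "generic_params p q t a b xs \<longleftrightarrow>
     q \<noteq> 0 \<and> t \<noteq> 0 \<and> a \<noteq> 0 \<and> b \<noteq> 0 \<and> (\<forall>x\<in>set xs. x \<noteq> 0) \<and>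
     (\<forall>(r::int) (s::int) (\<alpha>::int) (\<beta>::int) (\<gamma>::nat \<Rightarrow> int) (m::int).
        (r \<noteq> 0 \<or> s \<noteq> 0 \<or> \<alpha> \<noteq> 0 \<or> \<beta> \<noteq> 0 \<or> (\<exists>i<length xs. \<gamma> i \<noteq> 0)) \<longrightarrow>
        q powi r * t powi s * a powi \<alpha> * b powi \<beta> * (\<Prod>i<length xs. (xs ! i) powi \<gamma> i) \<noteq> p powi m)"

end

theory Submission
  imports Defs
begin

text \<open>
  Since \<open>E(1) = 0\<close>, the factor \<open>(x\<^sup>-\<^sup>1)\<^sub>\<nu>\<close> makes the one-variable function
  \<open>W\<^sub>\<nu>\<^sub>/\<^sub>\<rho>(1)\<close> vanish unless \<open>\<nu>\<^sub>1 = 0\<close>; in the branching recursion each variable of the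
  tail \<open>t\<^sup>k\<^sup>-\<^sup>1, \<dots>, t, 1\<close> is shifted to exactly \<open>1\<close>, so \<open>W\<^sub>\<nu>(t\<^sup>k\<^sup>-\<^sup>1, \<dots>, 1) = \<delta>\<^sub>\<nu>\<^sub>,\<^sub>0\<close>.
  Branching off the remaining \<open>n - k\<close> variables one at a time, interlacing keeps every
  intermediate partition supported on the first \<open>n - k\<close> parts, and a \<open>W\<close> with fewer
  variables than nonzero parts vanishes; on the surviving terms the one-variable \<open>W\<close> for
  \<open>n\<close> parts equals the one for \<open>n - k\<close> parts, since all extra factors are \<open>1\<close>. The \<open>k\<close>
  tail variables only contribute the shifts \<open>x t\<^sup>-\<^sup>k, a t\<^sup>2\<^sup>k, b t\<^sup>k\<close> of the recursion.
\<close>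

lemma convergent_prod_qpinf:
  fixes p x :: "'a :: {real_normed_field, banach}"
  assumes "norm p < 1"
  shows "convergent_prod (\<lambda>k. 1 - x * p ^ k)"
proof -
  have "summable (\<lambda>k. norm x * norm p ^ k)"
    using assms by (intro summable_mult summable_geometric) simp
  moreover have "norm ((1 - x * p ^ k) - 1) = norm x * norm p ^ k" for k
    by (simp add: norm_mult norm_power)
  ultimately have "summable (\<lambda>k. norm ((1 - x * p ^ k) - 1))"
    by simp
  then show ?thesis
    by (intro abs_convergent_prod_imp_convergent_prod summable_imp_abs_convergent_prod)
qed

lemma qpinf_1: "norm p < 1 \<Longrightarrow> qpinf p 1 = 0"
  unfolding qpinf_def
  using has_prod_zeroI[OF convergent_prod_has_prod[OF convergent_prod_qpinf], of p 1 0] by simp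

lemma qpinf_nonzero:
  assumes "norm p < 1" "\<And>k. x * p ^ k \<noteq> 1"
  shows "qpinf p x \<noteq> 0"
  unfolding qpinf_def
  by (rule prodinf_nonzero[OF convergent_prod_qpinf[OF assms(1)]]) (use assms(2) in auto)

lemma Eth_1: "norm p < 1 \<Longrightarrow> Eth p 1 = 0"
  by (simp add: Eth_def qpinf_1)

lemma Eth_nonzero:
  assumes "norm p < 1" "x \<noteq> 0" "\<And>m. x \<noteq> p powi m"
  shows "Eth p x \<noteq> 0"
proof -
  have "x * p ^ k \<noteq> 1" for k
  proof
    assume "x * p ^ k = 1"
    then have "inverse (p ^ k) = x"
      by (simp add: inverse_unique mult.commute)
    then have "x = p powi (- int k)"
      by (simp add: power_int_minus)
    with assms(3) show False by blast
  qed
  moreover have "p / x * p ^ k \<noteq> 1" for k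
  proof
    assume "p / x * p ^ k = 1"
    then have "x = p ^ Suc k"
      using assms(2) by (simp add: field_simps)
    then have "x = p powi int (Suc k)"
      by (simp only: power_int_of_nat)
    with assms(3) show False by blast
  qed
  ultimately show ?thesis
    unfolding Eth_def using qpinf_nonzero[OF assms(1)] by simp
qed

lemma epoch_0 [simp]: "epoch p q a 0 = 1"
  by (simp add: epoch_def)

lemma pt_eq_0_beyond: "N < i \<Longrightarrow> pt N lam i = 0"
  by (simp add: pt_def)

lemma pt_truncate:
  assumes "N \<le> n" "\<forall>i\<in>{N<..n}. lam i = 0"
  shows "pt n lam = pt N lam"
  using assms by (auto simp: pt_def fun_eq_iff)

lemma prod_triangle_truncate:
  fixes f :: "nat \<Rightarrow> nat \<Rightarrow> 'a :: comm_monoid_mult"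
  assumes "N \<le> n" "d \<le> c" "\<And>i j. N + d < j \<Longrightarrow> j \<le> n + d \<Longrightarrow> f i j = 1"
  shows "(\<Prod>i\<in>{1..n}. \<Prod>j\<in>{i+c..n+d}. f i j) = (\<Prod>i\<in>{1..N}. \<Prod>j\<in>{i+c..N+d}. f i j)"
proof -
  have "(\<Prod>j\<in>{i+c..n+d}. f i j) = (\<Prod>j\<in>{i+c..N+d}. f i j)" for i
    using assms by (intro prod.mono_neutral_right) auto
  then have "(\<Prod>i\<in>{1..n}. \<Prod>j\<in>{i+c..n+d}. f i j) = (\<Prod>i\<in>{1..n}. \<Prod>j\<in>{i+c..N+d}. f i j)"
    by simp
  also have "\<dots> = (\<Prod>i\<in>{1..N}. \<Prod>j\<in>{i+c..N+d}. f i j)"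
    using assms by (intro prod.mono_neutral_right) auto
  finally show ?thesis .
qed

lemma epochP_truncate:
  assumes "N \<le> n" "\<forall>i\<in>{N<..n}. lam i = 0"
  shows "epochP p q t n a lam = epochP p q t N a lam"
  unfolding epochP_def pt_truncate[OF assms]
  using assms(1) by (intro prod.mono_neutral_right) (auto simp: pt_eq_0_beyond)

lemma interlace_truncate:
  assumes "N \<le> n" "\<forall>i\<in>{N<..n}. lam i = 0" "\<forall>i\<in>{N<..n}. mu i = 0"
  shows "interlace n lam mu = interlace N lam mu"
  unfolding interlace_def pt_truncate[OF assms(1,2)] pt_truncate[OF assms(1,3)]
  using assms(1) by (auto simp: pt_eq_0_beyond)

text \<open>The factors with \<open>j = N + 1\<close> have length \<open>\<mu>\<^sub>N - \<lambda>\<^sub>N\<^sub>+\<^sub>1\<close>, hence \<open>\<mu>\<^sub>N = 0\<close> is needed.\<close>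
lemma Hfac_truncate:
  assumes "N \<le> n" "\<forall>i\<in>{N<..n}. lam i = 0" "\<forall>i\<in>{N..n}. mu i = 0"
  shows "Hfac q p t b n lam mu = Hfac q p t b N lam mu"
proof -
  have mu: "\<forall>i\<in>{N<..n}. mu i = 0"
    using assms(3) by auto
  have "pt N mu i = 0" if "N \<le> i" for i
    using that assms(1,3) by (auto simp: pt_def)
  then show ?thesis
    unfolding Hfac_def Let_def pt_truncate[OF assms(1,2)] pt_truncate[OF assms(1) mu]
    using assms(1) by (intro arg_cong2[where f = "(*)"]
        prod_triangle_truncate[where d = 0, unfolded add_0_right] prod_triangle_truncate)
      (auto simp: pt_eq_0_beyond)
qed

lemma W1_truncate:
  assumes "N \<le> n" "\<forall>i\<in>{N<..n}. lam i = 0" "\<forall>i\<in>{N..n}. mu i = 0"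
    and "\<And>i. N < i \<Longrightarrow> i \<le> n \<Longrightarrow> Eth p (b * t powi (1 - 2 * int i)) \<noteq> 0"
  shows "W1 q p t n x a b lam mu = W1 q p t N x a b lam mu"
proof -
  have mu: "\<forall>i\<in>{N<..n}. mu i = 0"
    using assms(3) by auto
  have "pt N mu i = 0" if "N \<le> i" for i
    using that assms(1,3) by (auto simp: pt_def)
  then show ?thesis
    unfolding W1_def Let_def epochP_truncate[OF assms(1,2)] epochP_truncate[OF assms(1) mu]
      Hfac_truncate[OF assms(1-3)] interlace_truncate[OF assms(1,2) mu]
      pt_truncate[OF assms(1,2)] pt_truncate[OF assms(1) mu]
    using assms(1,4) by (intro if_cong arg_cong2[where f = "(*)"] prod.mono_neutral_right refl)
      (auto simp: pt_eq_0_beyond)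
qed

lemma interl_set_truncate:
  assumes "N \<le> n" "\<forall>i\<in>{N<..n}. lam i = 0"
  shows "interl_set n lam = interl_set N lam"
proof (intro set_eqI iffI)
  fix nu
  assume nu: "nu \<in> interl_set n lam"
  have vanishes: "\<forall>i\<in>{N<..n}. nu i = 0"
  proof
    fix i
    assume i: "i \<in> {N<..n}"
    then have "pt n nu i \<le> pt n lam i"
      using nu assms(1) by (auto simp: interl_set_def interlace_def)
    then show "nu i = 0"
      using i assms by (simp add: pt_def)
  qed
  moreover have "nu i = 0" if "i < 1 \<or> N < i" for i
    using nu that vanishes by (cases "i \<le> n") (auto simp: interl_set_def)
  ultimately show "nu \<in> interl_set N lam"
    using nu interlace_truncate[OF assms] unfolding interl_set_def by auto
next
  fix nu
  assume nu: "nu \<in> interl_set N lam"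
  then have "\<forall>i\<in>{N<..n}. nu i = 0"
    by (simp add: interl_set_def)
  then show "nu \<in> interl_set n lam"
    using nu assms(1) interlace_truncate[OF assms] by (auto simp: interl_set_def)
qed

lemma interl_setD:
  assumes "rho \<in> interl_set N nu" "1 \<le> i" "i \<le> N"
  shows "rho i \<le> nu i" and "i < N \<Longrightarrow> nu (Suc i) \<le> rho i"
proof -
  have "pt N nu (i + 1) \<le> pt N rho i" "pt N rho i \<le> pt N nu i"
    using assms by (auto simp: interl_set_def interlace_def)
  then show "rho i \<le> nu i" and "i < N \<Longrightarrow> nu (Suc i) \<le> rho i"
    using assms(2,3) by (simp_all add: pt_def)
qed

lemma interl_set_zero:
  assumes "\<forall>i\<in>{1..N}. nu i = 0"
  shows "interl_set N nu = {\<lambda>_. 0}"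
proof -
  have "rho i = 0" if "rho \<in> interl_set N nu" for rho i
  proof (cases "1 \<le> i \<and> i \<le> N")
    case True
    then show ?thesis
      using interl_setD(1)[OF that] assms by auto
  next
    case False
    then show ?thesis
      using that by (auto simp: interl_set_def not_le)
  qed
  moreover have "(\<lambda>_. 0) \<in> interl_set N nu"
    using assms by (auto simp: interl_set_def interlace_def pt_def)
  ultimately show ?thesis
    by blast
qed

lemma W1_zero_zero:
  assumes "\<forall>i\<in>{1..N}. lam i = 0" "\<forall>i\<in>{1..N}. mu i = 0"
    and "\<And>i. 1 \<le> i \<Longrightarrow> i \<le> N \<Longrightarrow> Eth p (b * t powi (1 - 2 * int i)) \<noteq> 0"
  shows "W1 q p t N x a b lam mu = 1"
proof -
  have "pt N lam = (\<lambda>_. 0)" "pt N mu = (\<lambda>_. 0)"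
    using assms(1,2) by (auto simp: pt_def)
  then show ?thesis
    unfolding W1_def Hfac_def epochP_def interlace_def Let_def
    using assms(3) by simp
qed

lemma W1_at_1:
  assumes "norm p < 1" "1 \<le> N" "lam 1 \<noteq> 0"
  shows "W1 q p t N 1 a b lam mu = 0"
proof -
  have "epoch p q 1 (pt N lam 1) = 0"
    using assms by (auto simp: epoch_def pt_def Eth_1 intro!: prod_zero bexI[of _ 0])
  then have "epochP p q t N (inverse 1) lam = 0"
    unfolding epochP_def using assms(2) by (auto intro!: prod_zero bexI[of _ 1])
  then show ?thesis
    unfolding W1_def Let_def by simp
qed

lemma Wm_eq_0_if_too_many_parts:
  assumes "length zs < j" "j \<le> N" "nu j \<noteq> 0"
  shows "Wm q p t N zs a b nu (\<lambda>_. 0) = 0"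
  using assms
proof (induction zs arbitrary: nu j)
  case Nil
  then have "pt N nu j \<noteq> pt N (\<lambda>_. 0) j"
    by (simp add: pt_def)
  with Nil show ?case
    by auto
next
  case (Cons y zs)
  then obtain i where i: "j = Suc i" "length zs < i"
    by (cases j) auto
  have "Wm q p t N zs a b rho (\<lambda>_. 0) = 0" if "rho \<in> interl_set N nu" for rho
  proof -
    have "nu j \<le> rho i"
      using interl_setD(2)[OF that] i Cons.prems by simp
    then show ?thesis
      using Cons i by auto
  qed
  then show ?case
    by simp
qed

lemma Wm_at_1:
  assumes "norm p < 1"
    and "\<And>i. 1 \<le> i \<Longrightarrow> i \<le> N \<Longrightarrow> Eth p (b * t powi (1 - 2 * int i)) \<noteq> 0"
  shows "Wm q p t N [1] a b nu (\<lambda>_. 0) = Wm q p t N [] a b nu (\<lambda>_. 0)"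
proof (cases "\<forall>i\<in>{1..N}. nu i = 0")
  case True
  then show ?thesis
    using W1_zero_zero[OF True _ assms(2)] by (simp add: interl_set_zero pt_def)
next
  case False
  have "W1 q p t N 1 a b nu rho * Wm q p t N [] a b rho (\<lambda>_. 0) = 0"
    if rho: "rho \<in> interl_set N nu" for rho
  proof (cases "\<forall>i\<in>{1..N}. rho i = 0")
    case True
    have "nu i = 0" if "2 \<le> i" "i \<le> N" for i
      using interl_setD(2)[OF rho, of "i - 1"] True that by simp
    moreover obtain i where i: "i \<in> {1..N}" "nu i \<noteq> 0"
      using False by blast
    ultimately have "i = 1"
      by (metis atLeastAtMost_iff le_antisym not_less_eq_eq one_add_one plus_1_eq_Suc)
    with i have "1 \<le> N" "nu 1 \<noteq> 0"
      by auto
    then show ?thesis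
      using W1_at_1[OF assms(1)] by simp
  next
    case False
    then show ?thesis
      by (auto simp: pt_def)
  qed
  with False show ?thesis
    by (auto simp: pt_def intro: sum.neutral)
qed

lemma Eth_shift_nonzero:
  assumes "t \<noteq> 0" "\<And>s. Eth p (b * t powi s) \<noteq> 0"
  shows "Eth p (b * t powi r * t powi s) \<noteq> 0"
proof -
  have "t powi r * t powi s = t powi (r + s)"
    using assms(1) by (simp add: power_int_add)
  then show ?thesis
    by (metis assms(2) mult.assoc)
qed

lemma Wm_geometric_tail:
  assumes "norm p < 1" "t \<noteq> 0" "\<And>s. Eth p (b * t powi s) \<noteq> 0"
  shows "Wm q p t N (map (\<lambda>j. t ^ (k - 1 - j)) [0..<k]) a b nu (\<lambda>_. 0)
       = Wm q p t N [] a b nu (\<lambda>_. 0)"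
proof (induction k arbitrary: nu)
  case 0
  show ?case
    by simp
next
  case (Suc k)
  let ?a = "a * t powi (2 * int k)" and ?b = "b * t powi int k"
  have "map (\<lambda>j. t ^ (Suc k - 1 - j)) [0..<Suc k] = t ^ k # map (\<lambda>j. t ^ (k - 1 - j)) [0..<k]"
    by (simp add: upt_conv_Cons map_Suc_upt[symmetric] del: upt_Suc)
  moreover have "t ^ k * t powi (- int k) = 1"
    using assms(2) by (simp add: power_int_minus)
  ultimately have "Wm q p t N (map (\<lambda>j. t ^ (Suc k - 1 - j)) [0..<Suc k]) a b nu (\<lambda>_. 0)
      = Wm q p t N [1] ?a ?b nu (\<lambda>_. 0)"
    using Suc.IH by simp
  also have "\<dots> = Wm q p t N [] ?a ?b nu (\<lambda>_. 0)"
    using Eth_shift_nonzero[OF assms(2,3)] by (intro Wm_at_1 assms(1))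
  finally show ?case
    by simp
qed

lemma Wm_append_geometric_tail:
  assumes "norm p < 1" "t \<noteq> 0" "\<And>s. Eth p (b * t powi s) \<noteq> 0"
    and "length ys \<le> N" "\<forall>i\<in>{N<..N + k}. lam i = 0"
  shows "Wm q p t (N + k) (ys @ map (\<lambda>j. t ^ (k - 1 - j)) [0..<k]) a b lam (\<lambda>_. 0)
       = Wm q p t N (map (\<lambda>z. z * t powi (- int k)) ys)
           (a * t powi (2 * int k)) (b * t powi int k) lam (\<lambda>_. 0)"
  using assms(4,5)
proof (induction ys arbitrary: lam)
  case Nil
  have "{1..N + k} = {1..N} \<union> {N<..N + k}"
    by auto
  with Nil.prems(2) have "(\<forall>i\<in>{1..N + k}. lam i = 0) \<longleftrightarrow> (\<forall>i\<in>{1..N}. lam i = 0)"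
    by auto
  then show ?case
    using Wm_geometric_tail[OF assms(1-3)] by (simp add: pt_def)
next
  case (Cons y ys)
  let ?T = "map (\<lambda>j. t ^ (k - 1 - j)) [0..<k]" and ?ys = "map (\<lambda>z. z * t powi (- int k)) ys"
  let ?a = "a * t powi (2 * int k)" and ?b = "b * t powi int k" and ?m = "int (length ys)"
  have shift_x: "y * t powi (- int (length (ys @ ?T))) = y * t powi (- int k) * t powi (- ?m)"
    and shift_a: "a * t powi (2 * int (length (ys @ ?T))) = ?a * t powi (2 * ?m)"
    using assms(2) by (simp_all add: power_int_add[symmetric] algebra_simps)
  have shift_b: "b * t powi int (length (ys @ ?T)) = ?b * t powi ?m"
    unfolding power_int_of_nat by (simp add: power_add algebra_simps)
  have termwise: "W1 q p t (N + k) x' a' b' lam nu * Wm q p t (N + k) (ys @ ?T) a b nu (\<lambda>_. 0)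
      = W1 q p t N x' a' b' lam nu * Wm q p t N ?ys ?a ?b nu (\<lambda>_. 0)"
    if nu: "nu \<in> interl_set N lam" and b': "\<And>s. Eth p (b' * t powi s) \<noteq> 0" for nu x' a' b'
  proof -
    have nu_vanishes: "\<forall>i\<in>{N<..N + k}. nu i = 0"
      using nu by (simp add: interl_set_def)
    then have IH: "Wm q p t (N + k) (ys @ ?T) a b nu (\<lambda>_. 0) = Wm q p t N ?ys ?a ?b nu (\<lambda>_. 0)"
      using Cons by simp
    show ?thesis
    proof (cases "nu N = 0")
      case True
      with nu_vanishes have "\<forall>i\<in>{N..N + k}. nu i = 0"
        by (metis atLeastAtMost_iff greaterThanAtMost_iff le_neq_implies_less)
      then show ?thesis
        unfolding IH using Cons.prems b' by (subst W1_truncate) auto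
    next
      case False
      then have "Wm q p t N ?ys ?a ?b nu (\<lambda>_. 0) = 0"
        using Cons.prems(1) by (intro Wm_eq_0_if_too_many_parts[of _ N]) auto
      then show ?thesis
        unfolding IH by simp
    qed
  qed
  show ?case
    unfolding append_Cons Wm.simps(2) list.map(2) length_map shift_x shift_a shift_b
      interl_set_truncate[OF le_add1 Cons.prems(2)]
    using Eth_shift_nonzero[OF assms(2) Eth_shift_nonzero[OF assms(2,3)]]
    by (intro sum.cong refl termwise)
qed

lemma generic_params_Eth_nonzero:
  assumes "norm p < 1" "generic_params p q t a b xs"
  shows "Eth p (b * t powi s) \<noteq> 0"
proof (rule Eth_nonzero[OF assms(1)])
  show "b * t powi s \<noteq> 0"
    using assms(2) by (simp add: generic_params_def)
  show "b * t powi s \<noteq> p powi m" for m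
  proof -
    have "q powi 0 * t powi s * a powi 0 * b powi 1 * (\<Prod>i<length xs. (xs ! i) powi 0) \<noteq> p powi m"
      using assms(2) unfolding generic_params_def
      by (elim conjE) (drule spec[of _ 0], drule spec[of _ s], drule spec[of _ 0],
          drule spec[of _ 1], drule spec[of _ "\<lambda>_. 0"], drule spec[of _ m], simp)
    then show ?thesis
      by (simp add: mult.commute)
  qed
qed

theorem mainTheorem8:
  fixes n k :: nat and lam :: "nat \<Rightarrow> nat" and xs :: "complex list"
    and q p t a b :: complex
  assumes "norm p < 1"
    and "1 \<le> k" and "k \<le> n"
    and "\<forall>i. 1 \<le> i \<and> i < n \<longrightarrow> lam (Suc i) \<le> lam i"
    and "\<forall>i. n - k < i \<and> i \<le> n \<longrightarrow> lam i = 0"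
    and "length xs = n - k"
    and "generic_params p q t a b xs"
  shows "Wm q p t n (xs @ map (\<lambda>j. t ^ (k - 1 - j)) [0..<k]) a b lam (\<lambda>_. 0)
       = Wm q p t (n - k) (map (\<lambda>z. z * t powi (- int k)) xs)
            (a * t powi (2 * int k)) (b * t powi (int k)) lam (\<lambda>_. 0)"
proof -
  have "t \<noteq> 0"
    using assms(7) by (simp add: generic_params_def)
  then have "Wm q p t (n - k + k) (xs @ map (\<lambda>j. t ^ (k - 1 - j)) [0..<k]) a b lam (\<lambda>_. 0)
      = Wm q p t (n - k) (map (\<lambda>z. z * t powi (- int k)) xs)
          (a * t powi (2 * int k)) (b * t powi (int k)) lam (\<lambda>_. 0)"
    using assms(3,5,6)
    by (intro Wm_append_geometric_tail[OF assms(1) _ generic_params_Eth_nonzero[OF assms(1,7)]]) auto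
  with assms(3) show ?thesis
    by simp
qed

end
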